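(* Let $X$ be a real Banach space, $Y$ an injective real Banach space, and $\mathcal{D}$ a closed subspace of $F_Y(X)$. Then the quotient space $Lip_0(X,Y)/{}^{\diamondsuit}\mathcal{D}$ is linearly isometrically isomorphic to $L(\mathcal{D},Y)$, via $f+{}^{\diamondsuit}\mathcal{D}\mapsto(\gamma\mapsto\gamma(f))$.
   Context: $Lip_0(X,Y)$ is the Banach space of Lipschitz maps $f:X\to Y$ with $f(0)=0$ and norm $Lip(f)=\sup_{x\neq y}\|f(x)-f(y)\|/\|x-y\|$. For $x\in X$, $\delta_x^Y\in L(Lip_0(X,Y),Y)$ is evaluation $\delta_x^Y(f)=f(x)$. $F_Y(X)$ is the norm-closed linear span of $\{\delta_x^Y:x\in X\}$ in $L(Lip_0(X,Y),Y)$. For $\mathcal{D}\subset F_Y(X)$, ${}^{\diamondsuit}\mathcal{D}=\{f\in Lip_0(X,Y):\gamma(f)=0\ \forall\gamma\in\mathcal{D}\}$, a closed subspace. $Y$ injective means: every bounded linear operator from a closed subspace of a Banach space into $Y$ extends to a bounded linear operator on the whole space with the same norm. *)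

theory Defs
  imports "HOL-Analysis.Analysis" "HOL-Probability.Discrete_Topology"
begin

definition Lip0 :: "('a::real_normed_vector \<Rightarrow> 'b::real_normed_vector) set" where
  "Lip0 = {f. (\<exists>C. C-lipschitz_on UNIV f) \<and> f 0 = 0}"

definition lipnorm :: "('a::real_normed_vector \<Rightarrow> 'b::real_normed_vector) \<Rightarrow> real" where
  "lipnorm f = Inf {C. C-lipschitz_on UNIV f}"

text \<open>Elements of L(Lip_0(X,Y),Y) are represented as maps on functions, taking
  the value 0 outside Lip_0(X,Y).\<close>
definition delta :: "'a::real_normed_vector \<Rightarrow> ('a \<Rightarrow> 'b::real_normed_vector) \<Rightarrow> 'b" where
  "delta x = (\<lambda>f. if f \<in> Lip0 then f x else 0)"

definition delta_span :: "(('a::real_normed_vector \<Rightarrow> 'b::real_normed_vector) \<Rightarrow> 'b) set" where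
  "delta_span = {\<gamma>. \<exists>(n::nat) (c::nat \<Rightarrow> real) (xs::nat \<Rightarrow> 'a).
                     \<gamma> = (\<lambda>f. \<Sum>i<n. c i *\<^sub>R delta (xs i) f)}"

definition op_close :: "(('a::real_normed_vector \<Rightarrow> 'b::real_normed_vector) \<Rightarrow> 'b)
     \<Rightarrow> (('a \<Rightarrow> 'b) \<Rightarrow> 'b) \<Rightarrow> real \<Rightarrow> bool" where
  "op_close \<gamma> \<sigma> \<epsilon> \<longleftrightarrow> (\<forall>f\<in>Lip0. norm (\<gamma> f - \<sigma> f) \<le> \<epsilon> * lipnorm f)"

text \<open>F_Y(X): norm closure of the span of the evaluations in L(Lip_0(X,Y),Y).\<close>
definition FY :: "(('a::real_normed_vector \<Rightarrow> 'b::real_normed_vector) \<Rightarrow> 'b) set" where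
  "FY = {\<gamma>. (\<forall>f. f \<notin> Lip0 \<longrightarrow> \<gamma> f = 0) \<and>
             (\<forall>\<epsilon>>0. \<exists>\<sigma>\<in>delta_span. op_close \<gamma> \<sigma> \<epsilon>)}"

definition opnorm :: "(('a::real_normed_vector \<Rightarrow> 'b::real_normed_vector) \<Rightarrow> 'b) \<Rightarrow> real" where
  "opnorm \<gamma> = Inf {K. 0 \<le> K \<and> (\<forall>f\<in>Lip0. norm (\<gamma> f) \<le> K * lipnorm f)}"

definition closed_subspace_FY :: "(('a::real_normed_vector \<Rightarrow> 'b::real_normed_vector) \<Rightarrow> 'b) set \<Rightarrow> bool" where
  "closed_subspace_FY D \<longleftrightarrow>
     D \<subseteq> FY \<and> (\<lambda>f. 0) \<in> D \<and>
     (\<forall>\<gamma>\<in>D. \<forall>\<sigma>\<in>D. (\<lambda>f. \<gamma> f + \<sigma> f) \<in> D) \<and>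
     (\<forall>c. \<forall>\<gamma>\<in>D. (\<lambda>f. c *\<^sub>R \<gamma> f) \<in> D) \<and>
     (\<forall>\<gamma>\<in>FY. (\<forall>\<epsilon>>0. \<exists>\<sigma>\<in>D. op_close \<gamma> \<sigma> \<epsilon>) \<longrightarrow> \<gamma> \<in> D)"

definition preannih :: "(('a::real_normed_vector \<Rightarrow> 'b::real_normed_vector) \<Rightarrow> 'b) set \<Rightarrow> ('a \<Rightarrow> 'b) set" where
  "preannih D = {f\<in>Lip0. \<forall>\<gamma>\<in>D. \<gamma> f = 0}"

definition quot_norm :: "(('a::real_normed_vector \<Rightarrow> 'b::real_normed_vector) \<Rightarrow> 'b) set \<Rightarrow> ('a \<Rightarrow> 'b) \<Rightarrow> real" where
  "quot_norm D f = Inf {lipnorm (\<lambda>x. f x - g x) | g. g \<in> preannih D}"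

definition linear_on_set :: "'c::real_vector set \<Rightarrow> ('c \<Rightarrow> 'd::real_vector) \<Rightarrow> bool" where
  "linear_on_set S T \<longleftrightarrow> (\<forall>x\<in>S. \<forall>y\<in>S. T (x + y) = T x + T y) \<and> (\<forall>c. \<forall>x\<in>S. T (c *\<^sub>R x) = c *\<^sub>R T x)"

definition bdd_lin_on_D :: "(('a::real_normed_vector \<Rightarrow> 'b::real_normed_vector) \<Rightarrow> 'b) set
     \<Rightarrow> ((('a \<Rightarrow> 'b) \<Rightarrow> 'b) \<Rightarrow> 'b) \<Rightarrow> bool" where
  "bdd_lin_on_D D T \<longleftrightarrow>
     (\<forall>\<gamma>\<in>D. \<forall>\<sigma>\<in>D. T (\<lambda>f. \<gamma> f + \<sigma> f) = T \<gamma> + T \<sigma>) \<and>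
     (\<forall>c. \<forall>\<gamma>\<in>D. T (\<lambda>f. c *\<^sub>R \<gamma> f) = c *\<^sub>R T \<gamma>) \<and>
     (\<exists>K. \<forall>\<gamma>\<in>D. norm (T \<gamma>) \<le> K * opnorm \<gamma>)"

definition LDY_norm :: "(('a::real_normed_vector \<Rightarrow> 'b::real_normed_vector) \<Rightarrow> 'b) set
     \<Rightarrow> ((('a \<Rightarrow> 'b) \<Rightarrow> 'b) \<Rightarrow> 'b) \<Rightarrow> real" where
  "LDY_norm D T = Inf {K. 0 \<le> K \<and> (\<forall>\<gamma>\<in>D. norm (T \<gamma>) \<le> K * opnorm \<gamma>)}"

instance bcontfun :: (metric_space, banach) banach ..


text \<open>\<open>injective_wrt TYPE('e) TYPE('b)\<close>: every bounded linear operator from a closed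
  subspace of the Banach space 'e into 'b extends to a bounded linear operator
  on 'e with the same norm.  (HOL cannot quantify over all types inside a
  formula.)\<close>
definition injective_wrt :: "'e::banach itself \<Rightarrow> 'b::banach itself \<Rightarrow> bool" where
  "injective_wrt _ _ \<longleftrightarrow>
     (\<forall>(S::'e set) (T::'e \<Rightarrow> 'b) (K::real).
        subspace S \<and> closed S \<and> linear_on_set S T \<and> 0 \<le> K \<and>
        (\<forall>x\<in>S. norm (T x) \<le> K * norm x) \<longrightarrow>
        (\<exists>T'::'e \<Rightarrow> 'b. bounded_linear T' \<and> (\<forall>x\<in>S. T' x = T x) \<and>
                         (\<forall>x. norm (T' x) \<le> K * norm x)))"

end

theory Submission
  imports Defs
begin

text \<open>Every \<open>\<gamma> \<in> F\<^sub>Y(X)\<close> is linear and bounded on \<open>Lip\<^sub>0(X,Y)\<close>.  Recording the numbers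
  \<open>\<phi> (\<gamma> f) / Lip(f)\<close> for all \<open>f\<close> and all \<open>\<phi>\<close> in the dual unit ball of \<open>Y\<close> embeds \<open>F\<^sub>Y(X)\<close>
  into a space \<open>\<ell>\<^sub>\<infinity>\<close>, isometrically by Hahn--Banach, and the image of the closed subspace
  \<open>\<D>\<close> is closed.  Given \<open>T \<in> L(\<D>,Y)\<close>, injectivity of \<open>Y\<close> extends \<open>T\<close>, transported to
  this image, to an operator \<open>T'\<close> on all of \<open>\<ell>\<^sub>\<infinity>\<close> of the same norm.  Then
  \<open>h x = T' (\<delta>\<^sub>x)\<close> is Lipschitz with \<open>Lip(h) \<le> \<parallel>T\<parallel>\<close>, and \<open>T'\<close> agrees with evaluation at
  \<open>h\<close> on the span of the \<open>\<delta>\<^sub>x\<close>, hence on \<open>F\<^sub>Y(X)\<close> by density.  So every \<open>T\<close> is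
  evaluation at some \<open>h\<close> with \<open>Lip(h) \<le> \<parallel>T\<parallel>\<close>.  This is surjectivity; for
  \<open>T = (\<gamma> \<mapsto> \<gamma> f)\<close> the element \<open>f - h\<close> of \<open>\<^sup>\<diamondsuit>\<D>\<close> shows that the quotient norm of \<open>f\<close>
  is at most \<open>\<parallel>T\<parallel>\<close>, and the reverse inequality is immediate.\<close>

lemma field_le_epsilon_mult:
  fixes x M :: real
  assumes "\<And>e. 0 < e \<Longrightarrow> x \<le> e * M"
  shows "x \<le> 0"
proof (cases "M \<le> 0")
  case True
  then show ?thesis
    using assms[of 1] by simp
next
  case False
  show ?thesis
  proof (rule field_le_epsilon)
    fix e :: real
    assume "0 < e"
    then show "x \<le> 0 + e"
      using assms[of "e / M"] False by simp
  qed
qed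

text \<open>The norms \<open>lipnorm\<close>, \<open>opnorm\<close> and \<open>LDY_norm\<close> are all infima of the admissible
  constants in an estimate \<open>a i \<le> K * w i\<close>; such an infimum is itself admissible.\<close>
lemma Inf_bounds_nonneg:
  fixes a w :: "'i \<Rightarrow> real"
  assumes "0 \<le> K" "\<forall>i\<in>I. a i \<le> K * w i"
  shows "0 \<le> Inf {K. 0 \<le> K \<and> (\<forall>i\<in>I. a i \<le> K * w i)}"
  using assms by (intro cInf_greatest) auto

lemma Inf_bounds_le:
  fixes a w :: "'i \<Rightarrow> real"
  assumes "0 \<le> K" "\<forall>i\<in>I. a i \<le> K * w i"
  shows "Inf {K. 0 \<le> K \<and> (\<forall>i\<in>I. a i \<le> K * w i)} \<le> K"
  using assms by (intro cInf_lower) (auto simp: bdd_below_def)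

lemma Inf_bounds_bound:
  fixes a w :: "'i \<Rightarrow> real"
  assumes "0 \<le> K" "\<forall>i\<in>I. a i \<le> K * w i" "\<forall>i\<in>I. 0 \<le> w i" "i \<in> I"
  shows "a i \<le> Inf {K. 0 \<le> K \<and> (\<forall>i\<in>I. a i \<le> K * w i)} * w i"
proof (cases "w i = 0")
  case True
  then show ?thesis
    using assms by force
next
  case False
  then have "0 < w i"
    using assms by force
  have "a i / w i \<le> Inf {K. 0 \<le> K \<and> (\<forall>i\<in>I. a i \<le> K * w i)}"
    using assms \<open>0 < w i\<close> by (intro cInf_greatest) (auto simp: divide_le_eq)
  then show ?thesis
    using \<open>0 < w i\<close> by (simp add: divide_le_eq)
qed

section \<open>Hahn--Banach: norming functionals\<close>

definition dual_ball :: "('b::real_normed_vector \<Rightarrow> real) set" where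
  "dual_ball = {\<phi>. linear \<phi> \<and> (\<forall>z. \<phi> z \<le> norm z)}"

lemma dual_ball_abs_le:
  assumes "\<phi> \<in> dual_ball"
  shows "\<bar>\<phi> z\<bar> \<le> norm z"
proof -
  have "linear \<phi>" and le: "\<forall>z. \<phi> z \<le> norm z"
    using assms unfolding dual_ball_def by auto
  then have "\<phi> z \<le> norm z" "- \<phi> z \<le> norm z"
    using le[rule_format, of "- z"] by (auto simp: linear_neg)
  then show ?thesis
    by linarith
qed

text \<open>Partial linear functionals dominated by the norm are handled through their graphs in
  \<open>'b \<times> real\<close>; domination makes every such subspace a graph.\<close>
definition dominated_subspace :: "('b::real_normed_vector \<times> real) set \<Rightarrow> bool" where
  "dominated_subspace G \<longleftrightarrow> subspace G \<and> (\<forall>(x, r) \<in> G. r \<le> norm x)"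

lemma dominated_subspace_le: "dominated_subspace G \<Longrightarrow> (x, r) \<in> G \<Longrightarrow> r \<le> norm x"
  unfolding dominated_subspace_def by blast

lemma dominated_subspace_unique:
  assumes G: "dominated_subspace G" and "(x, r) \<in> G" "(x, s) \<in> G"
  shows "r = s"
proof -
  have "(0, r - s) \<in> G" "(0, s - r) \<in> G"
    using assms subspace_diff[of G] unfolding dominated_subspace_def by force+
  then have "r - s \<le> 0" "s - r \<le> 0"
    using dominated_subspace_le[OF G] norm_zero by fastforce+
  then show ?thesis
    by simp
qed

lemma dominated_subspace_line: "dominated_subspace (span {(y, norm y)})"
  unfolding dominated_subspace_def
proof
  show "\<forall>(x, r) \<in> span {(y, norm y)}. r \<le> norm x"
    by (auto simp: span_singleton abs_ge_self mult_right_mono)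
qed (rule subspace_span)

lemma dominated_subspace_chain_Union:
  assumes C: "subset.chain {G. dominated_subspace G} C" and "C \<noteq> {}"
  shows "dominated_subspace (\<Union>C)"
proof -
  have sub: "subspace G" and dom: "\<forall>(x, r) \<in> G. r \<le> norm x" if "G \<in> C" for G
    using C that unfolding subset.chain_def dominated_subspace_def by blast+
  have common: "\<exists>G\<in>C. p \<in> G \<and> q \<in> G" if "p \<in> \<Union>C" "q \<in> \<Union>C" for p q
    using that C unfolding subset.chain_def by blast
  have "subspace (\<Union>C)"
  proof (rule subspaceI)
    show "0 \<in> \<Union>C"
      using \<open>C \<noteq> {}\<close> sub subspace_0 by blast
    show "p + q \<in> \<Union>C" if "p \<in> \<Union>C" "q \<in> \<Union>C" for p q
      using common[OF that] sub subspace_add by blast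
    show "c *\<^sub>R p \<in> \<Union>C" if "p \<in> \<Union>C" for c p
      using that sub subspace_scale by blast
  qed
  then show ?thesis
    unfolding dominated_subspace_def using dom by blast
qed

lemma dominated_extension_pos:
  assumes G: "subspace G" and upper: "\<And>v s. (v, s) \<in> G \<Longrightarrow> c \<le> norm (v + z) - s"
    and "(u, r) \<in> G" "0 < t"
  shows "r + t * c \<le> norm (u + t *\<^sub>R z)"
proof -
  have "((1 / t) *\<^sub>R u, (1 / t) * r) \<in> G"
    using subspace_scale[OF G \<open>(u, r) \<in> G\<close>, of "1 / t"] by simp
  then have "t * c \<le> t * (norm ((1 / t) *\<^sub>R u + z) - (1 / t) * r)"
    using upper \<open>0 < t\<close> by (intro mult_left_mono) auto
  also have "\<dots> = norm (t *\<^sub>R ((1 / t) *\<^sub>R u + z)) - r"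
    using \<open>0 < t\<close> by (simp add: right_diff_distrib)
  also have "t *\<^sub>R ((1 / t) *\<^sub>R u + z) = u + t *\<^sub>R z"
    using \<open>0 < t\<close> by (simp add: algebra_simps)
  finally show ?thesis
    by simp
qed

text \<open>The one-dimensional step of Hahn--Banach: a value \<open>c\<close> for the new direction \<open>z\<close>
  exists because \<open>r - \<parallel>u - z\<parallel> \<le> \<parallel>v + z\<parallel> - s\<close> for all \<open>(u, r), (v, s) \<in> G\<close>.\<close>
lemma dominated_subspace_extend:
  assumes G: "dominated_subspace G"
  obtains c where "dominated_subspace {g + k *\<^sub>R (z, c) | g k. g \<in> G}"
proof -
  have sub: "subspace G" and dom: "\<And>u r. (u, r) \<in> G \<Longrightarrow> r \<le> norm u"
    using G unfolding dominated_subspace_def by auto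
  define A where "A = {r - norm (u - z) | u r. (u, r) \<in> G}"
  have sep: "r - norm (u - z) \<le> norm (v + z) - s" if "(u, r) \<in> G" "(v, s) \<in> G" for u r v s
  proof -
    have "r + s \<le> norm ((u - z) + (v + z))"
      using dom subspace_add[OF sub that] by simp
    also have "\<dots> \<le> norm (u - z) + norm (v + z)"
      by (rule norm_triangle_ineq)
    finally show ?thesis
      by simp
  qed
  have "(0, 0) \<in> G"
    using subspace_0[OF sub] by (simp add: zero_prod_def)
  then have "A \<noteq> {}" and "bdd_above A"
    unfolding A_def bdd_above_def using sep by fastforce+
  define c where "c = Sup A"
  have lower: "- c \<le> norm (u + - z) - r" if "(u, r) \<in> G" for u r
  proof -
    have "r - norm (u - z) \<in> A"
      using that unfolding A_def by blast
    then have "r - norm (u - z) \<le> c"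
      unfolding c_def using \<open>bdd_above A\<close> by (rule cSup_upper)
    then show ?thesis
      by simp
  qed
  have upper: "c \<le> norm (v + z) - s" if "(v, s) \<in> G" for v s
    unfolding c_def by (rule cSup_least) (use \<open>A \<noteq> {}\<close> sep that A_def in auto)
  have dom': "r + t * c \<le> norm (u + t *\<^sub>R z)" if "(u, r) \<in> G" for u r t
  proof (cases t "0::real" rule: linorder_cases)
    case less
    then show ?thesis
      using dominated_extension_pos[OF sub lower that, of "- t"] by simp
  next
    case greater
    then show ?thesis
      using dominated_extension_pos[OF sub upper that] by simp
  qed (use dom that in simp)
  let ?G = "{g + k *\<^sub>R (z, c) | g k. g \<in> G}"
  have "?G = {g + h | g h. g \<in> G \<and> h \<in> span {(z, c)}}"
    unfolding span_singleton by blast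
  then have "subspace ?G"
    using subspace_sums[OF sub subspace_span] by simp
  moreover have "\<forall>(x, r) \<in> ?G. r \<le> norm x"
    using dom' by force
  ultimately show ?thesis
    by (intro that) (simp add: dominated_subspace_def)
qed

lemma dominated_subspace_maximal_total:
  assumes M: "dominated_subspace M" and max: "\<And>G. dominated_subspace G \<Longrightarrow> M \<subseteq> G \<Longrightarrow> G = M"
  shows "\<exists>r. (z, r) \<in> M"
proof -
  obtain c where G: "dominated_subspace {g + k *\<^sub>R (z, c) | g k. g \<in> M}" (is "dominated_subspace ?G")
    using dominated_subspace_extend[OF M] .
  have "g \<in> ?G" if "g \<in> M" for g
  proof -
    have "g = g + 0 *\<^sub>R (z, c)"
      by (simp add: zero_prod_def)
    then show ?thesis
      using that by blast
  qed
  then have "?G = M"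
    using max[OF G] by blast
  moreover have "(z, c) \<in> ?G"
  proof -
    have "0 \<in> M"
      using M subspace_0 unfolding dominated_subspace_def by blast
    moreover have "(z, c) = 0 + 1 *\<^sub>R (z, c)"
      by (simp add: zero_prod_def)
    ultimately show ?thesis
      by blast
  qed
  ultimately show ?thesis
    by blast
qed

lemma dominated_subspace_graph:
  assumes M: "dominated_subspace M" and total: "\<And>z. \<exists>r. (z, r) \<in> M"
  obtains \<phi> where "linear \<phi>" "\<And>z. (z, \<phi> z) \<in> M"
proof
  define \<phi> where "\<phi> z = (THE r. (z, r) \<in> M)" for z
  show graph: "(z, \<phi> z) \<in> M" for z
  proof -
    have "\<exists>!r. (z, r) \<in> M"
      using total dominated_subspace_unique[OF M] by blast
    then show ?thesis
      unfolding \<phi>_def by (rule theI')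
  qed
  have \<phi>_eq: "\<phi> z = r" if "(z, r) \<in> M" for z r
    using dominated_subspace_unique[OF M graph that] .
  have sub: "subspace M"
    using M unfolding dominated_subspace_def by blast
  show "linear \<phi>"
  proof
    show "\<phi> (u + v) = \<phi> u + \<phi> v" for u v
      using \<phi>_eq subspace_add[OF sub graph graph] by simp
    show "\<phi> (k *\<^sub>R u) = k *\<^sub>R \<phi> u" for k u
      using \<phi>_eq subspace_scale[OF sub graph] by simp
  qed
qed

lemma norming_functional:
  fixes y :: "'b::real_normed_vector"
  obtains \<phi> :: "'b \<Rightarrow> real" where "\<phi> \<in> dual_ball" "\<phi> y = norm y"
proof -
  let ?P = "{G. dominated_subspace G \<and> (y, norm y) \<in> G}"
  have "\<exists>M\<in>?P. \<forall>G\<in>?P. M \<subseteq> G \<longrightarrow> G = M"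
  proof (rule subset_Zorn_nonempty)
    show "?P \<noteq> {}"
      using dominated_subspace_line span_base[of "(y, norm y)"] by blast
    show "\<Union>C \<in> ?P" if "C \<noteq> {}" "subset.chain ?P C" for C
    proof -
      have "subset.chain {G. dominated_subspace G} C"
        using that(2) unfolding subset.chain_def by blast
      then have "dominated_subspace (\<Union>C)"
        using dominated_subspace_chain_Union that(1) by blast
      moreover have "(y, norm y) \<in> \<Union>C"
        using that unfolding subset.chain_def by blast
      ultimately show ?thesis
        by simp
    qed
  qed
  then obtain M where M: "dominated_subspace M" "(y, norm y) \<in> M"
    and max: "\<And>G. dominated_subspace G \<Longrightarrow> M \<subseteq> G \<Longrightarrow> G = M"
    by blast
  obtain \<phi> where "linear \<phi>" and graph: "\<And>z. (z, \<phi> z) \<in> M"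
    using dominated_subspace_graph[OF M(1) dominated_subspace_maximal_total[OF M(1) max]] by blast
  then have "\<phi> \<in> dual_ball"
    using dominated_subspace_le[OF M(1)] unfolding dual_ball_def by blast
  moreover have "\<phi> y = norm y"
    using dominated_subspace_unique[OF M(1) graph M(2)] .
  ultimately show ?thesis
    using that by blast
qed

section \<open>Lipschitz maps vanishing at the origin\<close>

lemma lipnorm_eq_Inf_bounds:
  "lipnorm f = Inf {C. 0 \<le> C \<and> (\<forall>p\<in>UNIV. dist (f (fst p)) (f (snd p)) \<le> C * dist (fst p) (snd p))}"
  unfolding lipnorm_def lipschitz_on_def by simp

lemma Lip0_lipschitz:
  assumes "f \<in> Lip0"
  shows "lipschitz_on (lipnorm f) UNIV f"
proof -
  obtain C where "C-lipschitz_on UNIV f"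
    using assms unfolding Lip0_def by blast
  then have C: "0 \<le> C" "\<forall>p\<in>UNIV. dist (f (fst p)) (f (snd p)) \<le> C * dist (fst p) (snd p)"
    unfolding lipschitz_on_def by auto
  show ?thesis
    unfolding lipschitz_on_def lipnorm_eq_Inf_bounds
    using Inf_bounds_nonneg[OF C] Inf_bounds_bound[OF C, of "(x, y)" for x y] by auto
qed

lemma lipnorm_nonneg: "f \<in> Lip0 \<Longrightarrow> 0 \<le> lipnorm f"
  using Lip0_lipschitz lipschitz_on_nonneg by blast

lemma Lip0_norm_diff_le: "f \<in> Lip0 \<Longrightarrow> norm (f x - f y) \<le> lipnorm f * norm (x - y)"
  using lipschitz_onD[OF Lip0_lipschitz] by (simp add: dist_norm)

lemma Lip0_norm_le: "f \<in> Lip0 \<Longrightarrow> norm (f x) \<le> lipnorm f * norm x"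
  using Lip0_norm_diff_le[of f x 0] by (simp add: Lip0_def)

lemma Lip0I:
  assumes "\<And>x y. norm (h x - h y) \<le> C * norm (x - y)" "0 \<le> C" "h 0 = 0"
  shows "h \<in> Lip0" and "lipnorm h \<le> C"
proof -
  have "C-lipschitz_on UNIV h"
    using assms by (intro lipschitz_onI) (auto simp: dist_norm)
  then show "h \<in> Lip0" "lipnorm h \<le> C"
    using assms(3) unfolding Lip0_def lipnorm_def
    by (auto intro!: cInf_lower simp: bdd_below_def intro: lipschitz_on_nonneg)
qed

lemma Lip0_lincomb:
  assumes f: "f \<in> Lip0" and g: "g \<in> Lip0"
  shows "(\<lambda>x. f x + c *\<^sub>R g x) \<in> Lip0"
    and "lipnorm (\<lambda>x. f x + c *\<^sub>R g x) \<le> lipnorm f + \<bar>c\<bar> * lipnorm g"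
proof -
  have "norm ((f x + c *\<^sub>R g x) - (f y + c *\<^sub>R g y))
      \<le> (lipnorm f + \<bar>c\<bar> * lipnorm g) * norm (x - y)" for x y
  proof -
    have "norm ((f x + c *\<^sub>R g x) - (f y + c *\<^sub>R g y)) = norm ((f x - f y) + c *\<^sub>R (g x - g y))"
      by (simp add: algebra_simps)
    also have "\<dots> \<le> norm (f x - f y) + \<bar>c\<bar> * norm (g x - g y)"
      by (metis norm_scaleR norm_triangle_ineq)
    also have "\<dots> \<le> lipnorm f * norm (x - y) + \<bar>c\<bar> * (lipnorm g * norm (x - y))"
      by (intro add_mono mult_left_mono Lip0_norm_diff_le f g) auto
    finally show ?thesis
      by (simp add: algebra_simps)
  qed
  moreover have "0 \<le> lipnorm f + \<bar>c\<bar> * lipnorm g"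
    using lipnorm_nonneg[OF f] lipnorm_nonneg[OF g] by simp
  moreover have "f 0 + c *\<^sub>R g 0 = 0"
    using f g by (simp add: Lip0_def)
  ultimately show "(\<lambda>x. f x + c *\<^sub>R g x) \<in> Lip0"
    and "lipnorm (\<lambda>x. f x + c *\<^sub>R g x) \<le> lipnorm f + \<bar>c\<bar> * lipnorm g"
    using Lip0I[of "\<lambda>x. f x + c *\<^sub>R g x"] by blast+
qed

lemma Lip0_diff: "f \<in> Lip0 \<Longrightarrow> g \<in> Lip0 \<Longrightarrow> (\<lambda>x. f x - g x) \<in> Lip0"
  using Lip0_lincomb(1)[of f g "- 1"] by simp

section \<open>Bounded maps on \<open>Lip\<^sub>0(X,Y)\<close> and the space \<open>F\<^sub>Y(X)\<close>\<close>

definition Lip0_bounded :: "(('a::real_normed_vector \<Rightarrow> 'b::real_normed_vector) \<Rightarrow> 'b) \<Rightarrow> bool" where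
  "Lip0_bounded \<gamma> \<longleftrightarrow> (\<exists>B\<ge>0. \<forall>f\<in>Lip0. norm (\<gamma> f) \<le> B * lipnorm f)"

lemma Lip0_boundedI: "0 \<le> B \<Longrightarrow> (\<And>f. f \<in> Lip0 \<Longrightarrow> norm (\<gamma> f) \<le> B * lipnorm f) \<Longrightarrow> Lip0_bounded \<gamma>"
  unfolding Lip0_bounded_def by blast

lemma Lip0_bounded_add:
  assumes "Lip0_bounded \<gamma>" "Lip0_bounded \<sigma>"
  shows "Lip0_bounded (\<lambda>f. \<gamma> f + \<sigma> f)"
proof -
  obtain A B where A: "0 \<le> A" "\<forall>f\<in>Lip0. norm (\<gamma> f) \<le> A * lipnorm f"
    and B: "0 \<le> B" "\<forall>f\<in>Lip0. norm (\<sigma> f) \<le> B * lipnorm f"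
    using assms unfolding Lip0_bounded_def by blast
  show ?thesis
  proof (rule Lip0_boundedI)
    fix f :: "'a \<Rightarrow> 'b"
    assume "f \<in> Lip0"
    have "norm (\<gamma> f + \<sigma> f) \<le> norm (\<gamma> f) + norm (\<sigma> f)"
      by (rule norm_triangle_ineq)
    also have "\<dots> \<le> A * lipnorm f + B * lipnorm f"
      using A B \<open>f \<in> Lip0\<close> by (intro add_mono) auto
    finally show "norm (\<gamma> f + \<sigma> f) \<le> (A + B) * lipnorm f"
      by (simp add: distrib_right)
  qed (use A B in simp)
qed

lemma Lip0_bounded_scale:
  assumes "Lip0_bounded \<gamma>"
  shows "Lip0_bounded (\<lambda>f. c *\<^sub>R \<gamma> f)"
proof -
  obtain B where "0 \<le> B" "\<forall>f\<in>Lip0. norm (\<gamma> f) \<le> B * lipnorm f"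
    using assms unfolding Lip0_bounded_def by blast
  then show ?thesis
    by (intro Lip0_boundedI[of "\<bar>c\<bar> * B"]) (auto simp: mult.assoc mult_left_mono)
qed

lemma Lip0_bounded_diff:
  assumes "Lip0_bounded \<gamma>" "Lip0_bounded \<sigma>"
  shows "Lip0_bounded (\<lambda>f. \<gamma> f - \<sigma> f)"
  using Lip0_bounded_add[OF assms(1) Lip0_bounded_scale[OF assms(2), of "- 1"]] by simp

lemma Lip0_bounded_sum:
  assumes "\<And>i. i < (n::nat) \<Longrightarrow> Lip0_bounded (\<gamma> i)"
  shows "Lip0_bounded (\<lambda>f. \<Sum>i<n. c i *\<^sub>R \<gamma> i f)"
  using assms
proof (induction n)
  case 0
  then show ?case
    by (simp add: Lip0_boundedI[of 0])
next
  case (Suc n)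
  then show ?case
    by (simp add: Lip0_bounded_add Lip0_bounded_scale)
qed

lemma Lip0_bounded_op_close:
  assumes "Lip0_bounded \<sigma>" "op_close \<gamma> \<sigma> e" "0 \<le> e"
  shows "Lip0_bounded \<gamma>"
proof -
  have "Lip0_bounded (\<lambda>f. \<gamma> f - \<sigma> f)"
    using assms(2,3) unfolding op_close_def by (intro Lip0_boundedI[of e]) auto
  then show ?thesis
    using Lip0_bounded_add[OF _ assms(1)] by fastforce
qed

lemma op_close_commute: "op_close \<gamma> \<sigma> e \<longleftrightarrow> op_close \<sigma> \<gamma> e"
  unfolding op_close_def by (simp add: norm_minus_commute)

lemma op_close_trans:
  assumes "op_close \<gamma> \<sigma> d" "op_close \<sigma> \<tau> e"
  shows "op_close \<gamma> \<tau> (d + e)"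
  unfolding op_close_def
proof
  fix f :: "'a \<Rightarrow> 'b"
  assume f: "f \<in> Lip0"
  have "norm (\<gamma> f - \<tau> f) \<le> norm (\<gamma> f - \<sigma> f) + norm (\<sigma> f - \<tau> f)"
    using norm_triangle_ineq[of "\<gamma> f - \<sigma> f" "\<sigma> f - \<tau> f"] by simp
  also have "\<dots> \<le> d * lipnorm f + e * lipnorm f"
    using assms f unfolding op_close_def by (intro add_mono) auto
  finally show "norm (\<gamma> f - \<tau> f) \<le> (d + e) * lipnorm f"
    by (simp add: distrib_right)
qed

lemma delta_bounded: "Lip0_bounded (delta x)"
  by (rule Lip0_boundedI[of "norm x"]) (auto simp: delta_def mult.commute Lip0_norm_le)

lemma delta_span_bounded:
  assumes "\<sigma> \<in> delta_span"
  shows "Lip0_bounded \<sigma>"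
proof -
  obtain n c xs where "\<sigma> = (\<lambda>f. \<Sum>i<(n::nat). c i *\<^sub>R delta (xs i) f)"
    using assms unfolding delta_span_def by blast
  then show ?thesis
    by (simp add: Lip0_bounded_sum delta_bounded)
qed

lemma delta_span_linear:
  assumes "\<sigma> \<in> delta_span" "f \<in> Lip0" "g \<in> Lip0"
  shows "\<sigma> (\<lambda>x. f x + k *\<^sub>R g x) = \<sigma> f + k *\<^sub>R \<sigma> g"
proof -
  obtain n c xs where "\<sigma> = (\<lambda>f. \<Sum>i<(n::nat). c i *\<^sub>R delta (xs i) f)"
    using assms(1) unfolding delta_span_def by blast
  then show ?thesis
    using assms(2,3) Lip0_lincomb(1)[OF assms(2,3)]
    by (simp add: delta_def scaleR_right_distrib sum.distrib scaleR_sum_right mult.commute)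
qed

lemma FY_bounded:
  assumes "\<gamma> \<in> FY"
  shows "Lip0_bounded \<gamma>"
proof -
  obtain \<sigma> where "\<sigma> \<in> delta_span" "op_close \<gamma> \<sigma> 1"
    using assms zero_less_one unfolding FY_def by blast
  then show ?thesis
    using Lip0_bounded_op_close delta_span_bounded by fastforce
qed

lemma FY_linear:
  assumes \<gamma>: "\<gamma> \<in> FY" and f: "f \<in> Lip0" and g: "g \<in> Lip0"
  shows "\<gamma> (\<lambda>x. f x + k *\<^sub>R g x) = \<gamma> f + k *\<^sub>R \<gamma> g"
proof -
  define h where "h = (\<lambda>x. f x + k *\<^sub>R g x)"
  have h: "h \<in> Lip0"
    unfolding h_def using Lip0_lincomb(1)[OF f g] .
  have "norm (\<gamma> h - (\<gamma> f + k *\<^sub>R \<gamma> g)) \<le> e * (lipnorm h + lipnorm f + \<bar>k\<bar> * lipnorm g)"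
    if "0 < e" for e
  proof -
    obtain \<sigma> where \<sigma>: "\<sigma> \<in> delta_span" "op_close \<gamma> \<sigma> e"
      using \<gamma> \<open>0 < e\<close> unfolding FY_def by blast
    have "\<gamma> h - (\<gamma> f + k *\<^sub>R \<gamma> g) = (\<gamma> h - \<sigma> h) - (\<gamma> f - \<sigma> f) - k *\<^sub>R (\<gamma> g - \<sigma> g)"
      using delta_span_linear[OF \<sigma>(1) f g] unfolding h_def by (simp add: algebra_simps)
    also have "norm \<dots> \<le> norm (\<gamma> h - \<sigma> h) + norm (\<gamma> f - \<sigma> f) + \<bar>k\<bar> * norm (\<gamma> g - \<sigma> g)"
      by (rule order_trans[OF norm_triangle_ineq4 add_mono[OF norm_triangle_ineq4]]) simp
    also have "\<dots> \<le> e * lipnorm h + e * lipnorm f + \<bar>k\<bar> * (e * lipnorm g)"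
      using \<sigma>(2) f g h unfolding op_close_def by (intro add_mono mult_left_mono) auto
    finally show ?thesis
      by (simp add: algebra_simps)
  qed
  then have "norm (\<gamma> h - (\<gamma> f + k *\<^sub>R \<gamma> g)) \<le> 0"
    by (rule field_le_epsilon_mult)
  then show ?thesis
    unfolding h_def by simp
qed

lemma FY_diff: "\<gamma> \<in> FY \<Longrightarrow> f \<in> Lip0 \<Longrightarrow> g \<in> Lip0 \<Longrightarrow> \<gamma> (\<lambda>x. f x - g x) = \<gamma> f - \<gamma> g"
  using FY_linear[of \<gamma> f g "- 1"] by simp

lemma FY_closedI:
  assumes "\<And>f. f \<notin> Lip0 \<Longrightarrow> \<gamma> f = 0" and "\<And>e. 0 < e \<Longrightarrow> \<exists>\<sigma>\<in>FY. op_close \<gamma> \<sigma> e"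
  shows "\<gamma> \<in> FY"
  unfolding FY_def
proof (intro CollectI conjI allI impI)
  fix e :: real
  assume "0 < e"
  then obtain \<sigma> where "\<sigma> \<in> FY" "op_close \<gamma> \<sigma> (e / 2)"
    using assms(2)[of "e / 2"] by auto
  moreover obtain \<tau> where "\<tau> \<in> delta_span" "op_close \<sigma> \<tau> (e / 2)"
    using \<open>\<sigma> \<in> FY\<close> half_gt_zero[OF \<open>0 < e\<close>] unfolding FY_def by blast
  ultimately show "\<exists>\<tau>\<in>delta_span. op_close \<gamma> \<tau> e"
    using op_close_trans[of \<gamma> \<sigma> "e / 2" \<tau> "e / 2"] by auto
qed (use assms(1) in blast)

lemma opnorm_bound:
  assumes "Lip0_bounded \<gamma>" "f \<in> Lip0"
  shows "norm (\<gamma> f) \<le> opnorm \<gamma> * lipnorm f"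
proof -
  obtain B where B: "0 \<le> B" "\<forall>f\<in>Lip0. norm (\<gamma> f) \<le> B * lipnorm f"
    using assms(1) unfolding Lip0_bounded_def by blast
  show ?thesis
    unfolding opnorm_def using Inf_bounds_bound[OF B] lipnorm_nonneg assms(2) by blast
qed

lemma opnorm_nonneg:
  assumes "Lip0_bounded \<gamma>"
  shows "0 \<le> opnorm \<gamma>"
proof -
  obtain B where B: "0 \<le> B" "\<forall>f\<in>Lip0. norm (\<gamma> f) \<le> B * lipnorm f"
    using assms unfolding Lip0_bounded_def by blast
  show ?thesis
    unfolding opnorm_def by (rule Inf_bounds_nonneg[OF B])
qed

lemma opnorm_le: "0 \<le> K \<Longrightarrow> (\<forall>f\<in>Lip0. norm (\<gamma> f) \<le> K * lipnorm f) \<Longrightarrow> opnorm \<gamma> \<le> K"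
  unfolding opnorm_def by (rule Inf_bounds_le)

section \<open>The isometric embedding into \<open>\<ell>\<^sub>\<infinity>\<close>\<close>

text \<open>Dividing by \<open>Lip(f)\<close> instead of restricting to \<open>Lip(f) \<le> 1\<close> gives
  \<open>\<parallel>\<gamma> f\<parallel> \<le> \<parallel>linf_embed \<gamma>\<parallel> * Lip(f)\<close> without using linearity of \<open>\<gamma>\<close>; coordinates with
  \<open>Lip(f) = 0\<close> vanish since \<open>x / 0 = 0\<close>.\<close>
definition embed_coord :: "(('a::real_normed_vector \<Rightarrow> 'b::real_normed_vector) \<Rightarrow> 'b)
    \<Rightarrow> ('a \<Rightarrow> 'b) \<Rightarrow> ('b \<Rightarrow> real) \<Rightarrow> real" where
  "embed_coord \<gamma> f \<phi> = (if f \<in> Lip0 \<and> \<phi> \<in> dual_ball then \<phi> (\<gamma> f) / lipnorm f else 0)"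

definition linf_embed :: "(('a::real_normed_vector \<Rightarrow> 'b::real_normed_vector) \<Rightarrow> 'b)
    \<Rightarrow> (('a \<Rightarrow> 'b) \<times> ('b \<Rightarrow> real)) discrete \<Rightarrow>\<^sub>C real" where
  "linf_embed \<gamma> = Bcontfun (\<lambda>d. case_prod (embed_coord \<gamma>) (of_discrete d))"

lemma embed_coord_bound:
  assumes "0 \<le> B" "\<forall>f\<in>Lip0. norm (\<gamma> f) \<le> B * lipnorm f"
  shows "\<bar>embed_coord \<gamma> f \<phi>\<bar> \<le> B"
proof (cases "f \<in> Lip0 \<and> \<phi> \<in> dual_ball \<and> lipnorm f \<noteq> 0")
  case True
  then have "0 < lipnorm f"
    using lipnorm_nonneg[of f] by linarith
  have "\<bar>\<phi> (\<gamma> f)\<bar> \<le> norm (\<gamma> f)" "norm (\<gamma> f) \<le> B * lipnorm f"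
    using True assms(2) dual_ball_abs_le by auto
  then have "\<bar>\<phi> (\<gamma> f)\<bar> \<le> B * lipnorm f"
    by linarith
  moreover have "embed_coord \<gamma> f \<phi> = \<phi> (\<gamma> f) / lipnorm f"
    using True by (simp add: embed_coord_def)
  ultimately show ?thesis
    using \<open>0 < lipnorm f\<close> by (simp add: abs_divide pos_divide_le_eq)
next
  case False
  then have "embed_coord \<gamma> f \<phi> = 0"
    by (auto simp: embed_coord_def)
  then show ?thesis
    using assms(1) by simp
qed

lemma linf_embed_apply:
  assumes "Lip0_bounded \<gamma>"
  shows "apply_bcontfun (linf_embed \<gamma>) = (\<lambda>d. case_prod (embed_coord \<gamma>) (of_discrete d))"
proof -
  obtain B where "0 \<le> B" "\<forall>f\<in>Lip0. norm (\<gamma> f) \<le> B * lipnorm f"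
    using assms unfolding Lip0_bounded_def by blast
  then have "(\<lambda>d. case_prod (embed_coord \<gamma>) (of_discrete d)) \<in> bcontfun"
    by (intro bcontfun_normI[where b = B])
      (auto simp: continuous_on_open_vimage open_discrete embed_coord_bound split: prod.split)
  then show ?thesis
    unfolding linf_embed_def by (rule Bcontfun_inverse)
qed

lemma norm_linf_embed_le:
  assumes "0 \<le> B" "\<forall>f\<in>Lip0. norm (\<gamma> f) \<le> B * lipnorm f"
  shows "norm (linf_embed \<gamma>) \<le> B"
proof (rule norm_bound)
  have "Lip0_bounded \<gamma>"
    using assms unfolding Lip0_bounded_def by blast
  then show "norm (apply_bcontfun (linf_embed \<gamma>) d) \<le> B" for d
    using embed_coord_bound[OF assms] by (simp add: linf_embed_apply split: prod.split)
qed

lemma norm_apply_le_norm_linf_embed: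
  assumes \<gamma>: "Lip0_bounded \<gamma>" and f: "f \<in> Lip0"
  shows "norm (\<gamma> f) \<le> norm (linf_embed \<gamma>) * lipnorm f"
proof (cases "lipnorm f = 0")
  case True
  then show ?thesis
    using opnorm_bound[OF assms] by simp
next
  case False
  then have "0 < lipnorm f"
    using lipnorm_nonneg[OF f] by simp
  obtain \<phi> where "\<phi> \<in> dual_ball" "\<phi> (\<gamma> f) = norm (\<gamma> f)"
    using norming_functional[of "\<gamma> f"] by blast
  then have "embed_coord \<gamma> f \<phi> = norm (\<gamma> f) / lipnorm f"
    using f unfolding embed_coord_def by simp
  then have "norm (\<gamma> f) / lipnorm f \<le> norm (linf_embed \<gamma>)"
    using norm_bounded[of "linf_embed \<gamma>" "discrete (f, \<phi>)"] linf_embed_apply[OF \<gamma>]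
      \<open>0 < lipnorm f\<close> by (simp add: discrete_inverse)
  then show ?thesis
    using \<open>0 < lipnorm f\<close> by (simp add: divide_le_eq)
qed

lemma linf_embed_add:
  assumes "Lip0_bounded \<gamma>" "Lip0_bounded \<sigma>"
  shows "linf_embed (\<lambda>f. \<gamma> f + \<sigma> f) = linf_embed \<gamma> + linf_embed \<sigma>"
proof (rule bcontfun_eqI)
  show "apply_bcontfun (linf_embed (\<lambda>f. \<gamma> f + \<sigma> f)) d = apply_bcontfun (linf_embed \<gamma> + linf_embed \<sigma>) d" for d
    using assms Lip0_bounded_add[OF assms]
    by (cases "of_discrete d")
      (simp add: linf_embed_apply embed_coord_def dual_ball_def linear_add add_divide_distrib)
qed

lemma linf_embed_scale:
  assumes "Lip0_bounded \<gamma>"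
  shows "linf_embed (\<lambda>f. c *\<^sub>R \<gamma> f) = c *\<^sub>R linf_embed \<gamma>"
proof (rule bcontfun_eqI)
  show "apply_bcontfun (linf_embed (\<lambda>f. c *\<^sub>R \<gamma> f)) d = apply_bcontfun (c *\<^sub>R linf_embed \<gamma>) d" for d
    using assms Lip0_bounded_scale[OF assms]
    by (cases "of_discrete d") (simp add: linf_embed_apply embed_coord_def dual_ball_def linear_scale)
qed

lemma linf_embed_diff:
  assumes "Lip0_bounded \<gamma>" "Lip0_bounded \<sigma>"
  shows "linf_embed (\<lambda>f. \<gamma> f - \<sigma> f) = linf_embed \<gamma> - linf_embed \<sigma>"
  using linf_embed_add[OF assms(1) Lip0_bounded_scale[OF assms(2)], of "- 1"]
    linf_embed_scale[OF assms(2), of "- 1"]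
  by simp

lemma linf_embed_zero: "linf_embed (\<lambda>f. 0) = 0"
  using linf_embed_scale[OF Lip0_boundedI[of 0 "\<lambda>f. 0"], of 0] by simp

lemma linf_embed_sum:
  assumes "\<And>i. i < (n::nat) \<Longrightarrow> Lip0_bounded (\<gamma> i)"
  shows "linf_embed (\<lambda>f. \<Sum>i<n. c i *\<^sub>R \<gamma> i f) = (\<Sum>i<n. c i *\<^sub>R linf_embed (\<gamma> i))"
  using assms
proof (induction n)
  case 0
  then show ?case
    using linf_embed_zero by simp
next
  case (Suc n)
  then have "Lip0_bounded (\<lambda>f. \<Sum>i<n. c i *\<^sub>R \<gamma> i f)" "Lip0_bounded (\<gamma> n)"
    by (simp_all add: Lip0_bounded_sum)
  then show ?case
    using Suc by (simp add: linf_embed_add Lip0_bounded_scale linf_embed_scale)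
qed

lemma op_close_iff_dist_linf_embed:
  assumes \<gamma>: "Lip0_bounded \<gamma>" and \<sigma>: "Lip0_bounded \<sigma>" and "0 \<le> e"
  shows "op_close \<gamma> \<sigma> e \<longleftrightarrow> dist (linf_embed \<gamma>) (linf_embed \<sigma>) \<le> e"
proof -
  have dist: "dist (linf_embed \<gamma>) (linf_embed \<sigma>) = norm (linf_embed (\<lambda>f. \<gamma> f - \<sigma> f))"
    by (simp add: dist_norm linf_embed_diff[OF \<gamma> \<sigma>])
  show ?thesis
  proof
    assume "op_close \<gamma> \<sigma> e"
    then show "dist (linf_embed \<gamma>) (linf_embed \<sigma>) \<le> e"
      unfolding dist op_close_def using norm_linf_embed_le[OF \<open>0 \<le> e\<close>, of "\<lambda>f. \<gamma> f - \<sigma> f"] by simp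
  next
    assume le: "dist (linf_embed \<gamma>) (linf_embed \<sigma>) \<le> e"
    show "op_close \<gamma> \<sigma> e"
      unfolding op_close_def
    proof
      fix f :: "'a \<Rightarrow> 'b"
      assume f: "f \<in> Lip0"
      have "norm (\<gamma> f - \<sigma> f) \<le> dist (linf_embed \<gamma>) (linf_embed \<sigma>) * lipnorm f"
        using norm_apply_le_norm_linf_embed[OF Lip0_bounded_diff[OF \<gamma> \<sigma>] f] dist by simp
      also have "\<dots> \<le> e * lipnorm f"
        using le lipnorm_nonneg[OF f] by (rule mult_right_mono)
      finally show "norm (\<gamma> f - \<sigma> f) \<le> e * lipnorm f" .
    qed
  qed
qed

lemma norm_linf_embed:
  assumes "Lip0_bounded \<gamma>"
  shows "norm (linf_embed \<gamma>) = opnorm \<gamma>"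
proof (rule antisym)
  show "norm (linf_embed \<gamma>) \<le> opnorm \<gamma>"
    using opnorm_bound[OF assms] by (intro norm_linf_embed_le opnorm_nonneg[OF assms]) blast
  show "opnorm \<gamma> \<le> norm (linf_embed \<gamma>)"
    using norm_apply_le_norm_linf_embed[OF assms] by (intro opnorm_le norm_ge_zero) blast
qed

lemma inj_on_linf_embed: "inj_on linf_embed FY"
proof
  fix \<gamma> \<sigma> :: "('a \<Rightarrow> 'b) \<Rightarrow> 'b"
  assume "\<gamma> \<in> FY" "\<sigma> \<in> FY" "linf_embed \<gamma> = linf_embed \<sigma>"
  then have "op_close \<gamma> \<sigma> 0"
    using op_close_iff_dist_linf_embed[OF FY_bounded[of \<gamma>] FY_bounded[of \<sigma>], of 0] by simp
  then have "\<gamma> f = \<sigma> f" if "f \<in> Lip0" for f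
    using that unfolding op_close_def by simp
  moreover have "\<gamma> f = \<sigma> f" if "f \<notin> Lip0" for f
    using that \<open>\<gamma> \<in> FY\<close> \<open>\<sigma> \<in> FY\<close> unfolding FY_def by simp
  ultimately show "\<gamma> = \<sigma>"
    by blast
qed

section \<open>Completeness of closed subspaces of \<open>F\<^sub>Y(X)\<close>\<close>

lemma uniformly_Cauchy_weighted_limit:
  fixes g :: "nat \<Rightarrow> 'i \<Rightarrow> 'b::banach"
  assumes Cauchy: "\<And>e. 0 < e \<Longrightarrow> \<exists>N. \<forall>m\<ge>N. \<forall>n\<ge>N. \<forall>i\<in>I. norm (g m i - g n i) \<le> e * w i"
    and "0 < e"
  shows "\<exists>N. \<forall>n\<ge>N. \<forall>i\<in>I. norm (g n i - lim (\<lambda>m. g m i)) \<le> e * w i"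
proof -
  have limit: "(\<lambda>m. g m i) \<longlonglongrightarrow> lim (\<lambda>m. g m i)" if "i \<in> I" for i
  proof -
    have "Cauchy (\<lambda>m. g m i)"
    proof (rule CauchyI)
      fix \<epsilon> :: real
      assume "0 < \<epsilon>"
      define d where "d = \<epsilon> / (\<bar>w i\<bar> + 1)"
      have "0 < d"
        using \<open>0 < \<epsilon>\<close> unfolding d_def by simp
      then obtain N where N: "\<forall>m\<ge>N. \<forall>n\<ge>N. norm (g m i - g n i) \<le> d * w i"
        using Cauchy \<open>i \<in> I\<close> by blast
      have "d * w i \<le> d * \<bar>w i\<bar>"
        using \<open>0 < d\<close> by (intro mult_left_mono) auto
      also have "\<dots> < d * (\<bar>w i\<bar> + 1)"
        using \<open>0 < d\<close> by (intro mult_strict_left_mono) auto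
      also have "\<dots> = \<epsilon>"
        unfolding d_def by simp
      finally show "\<exists>N. \<forall>m\<ge>N. \<forall>n\<ge>N. norm (g m i - g n i) < \<epsilon>"
        using N by (meson le_less_trans)
    qed
    then show ?thesis
      by (simp add: Cauchy_convergent_iff convergent_LIMSEQ_iff)
  qed
  obtain N where N: "\<forall>m\<ge>N. \<forall>n\<ge>N. \<forall>i\<in>I. norm (g m i - g n i) \<le> e * w i"
    using Cauchy \<open>0 < e\<close> by blast
  have "norm (g n i - lim (\<lambda>m. g m i)) \<le> e * w i" if "n \<ge> N" "i \<in> I" for n i
  proof (rule LIMSEQ_le_const2)
    show "(\<lambda>m. norm (g n i - g m i)) \<longlonglongrightarrow> norm (g n i - lim (\<lambda>m. g m i))"
      by (intro tendsto_intros limit \<open>i \<in> I\<close>)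
    show "\<exists>M. \<forall>m\<ge>M. norm (g n i - g m i) \<le> e * w i"
      using N that by blast
  qed
  then show ?thesis
    by blast
qed

lemma FY_op_Cauchy_limit:
  fixes g :: "nat \<Rightarrow> ('a::real_normed_vector \<Rightarrow> 'b::banach) \<Rightarrow> 'b"
  assumes FY: "\<And>n. g n \<in> FY"
    and Cauchy: "\<And>e. 0 < e \<Longrightarrow> \<exists>N. \<forall>m\<ge>N. \<forall>n\<ge>N. op_close (g m) (g n) e"
  obtains \<gamma> where "\<gamma> \<in> FY" "\<And>e. 0 < e \<Longrightarrow> \<exists>N. \<forall>n\<ge>N. op_close (g n) \<gamma> e"
proof
  define \<gamma> where "\<gamma> f = (if f \<in> Lip0 then lim (\<lambda>n. g n f) else 0)" for f
  show conv: "\<exists>N. \<forall>n\<ge>N. op_close (g n) \<gamma> e" if "0 < e" for e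
    using uniformly_Cauchy_weighted_limit[where g = g and I = Lip0 and w = lipnorm, OF _ that] Cauchy
    unfolding op_close_def \<gamma>_def by simp
  show "\<gamma> \<in> FY"
  proof (rule FY_closedI)
    show "\<gamma> f = 0" if "f \<notin> Lip0" for f
      using that unfolding \<gamma>_def by simp
    show "\<exists>\<sigma>\<in>FY. op_close \<gamma> \<sigma> e" if e: "0 < e" for e
    proof -
      obtain N where "op_close (g N) \<gamma> e"
        using conv[OF e] by blast
      then show ?thesis
        using FY[of N] by (auto simp: op_close_commute)
    qed
  qed
qed

lemma closed_subspace_FY_subset: "closed_subspace_FY D \<Longrightarrow> D \<subseteq> FY"
  unfolding closed_subspace_FY_def by (elim conjE)

lemma closed_subspace_FY_closed:
  assumes "closed_subspace_FY D" "\<gamma> \<in> FY" "\<And>e. 0 < e \<Longrightarrow> \<exists>\<sigma>\<in>D. op_close \<gamma> \<sigma> e"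
  shows "\<gamma> \<in> D"
proof -
  have "\<forall>\<gamma>\<in>FY. (\<forall>\<epsilon>>0. \<exists>\<sigma>\<in>D. op_close \<gamma> \<sigma> \<epsilon>) \<longrightarrow> \<gamma> \<in> D"
    using assms(1) unfolding closed_subspace_FY_def by (elim conjE)
  then show ?thesis
    using assms(2,3) by blast
qed

lemma closed_subspace_FY_complete:
  fixes g :: "nat \<Rightarrow> ('a::real_normed_vector \<Rightarrow> 'b::banach) \<Rightarrow> 'b"
  assumes D: "closed_subspace_FY D" and gD: "\<And>n. g n \<in> D"
    and Cauchy: "\<And>e. 0 < e \<Longrightarrow> \<exists>N. \<forall>m\<ge>N. \<forall>n\<ge>N. op_close (g m) (g n) e"
  obtains \<gamma> where "\<gamma> \<in> D" "\<And>e. 0 < e \<Longrightarrow> \<exists>N. \<forall>n\<ge>N. op_close (g n) \<gamma> e"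
proof -
  have gFY: "g n \<in> FY" for n
    using gD closed_subspace_FY_subset[OF D] by blast
  obtain \<gamma> where "\<gamma> \<in> FY" and conv: "\<And>e. 0 < e \<Longrightarrow> \<exists>N. \<forall>n\<ge>N. op_close (g n) \<gamma> e"
    using FY_op_Cauchy_limit[OF gFY Cauchy] by blast
  have "\<exists>\<sigma>\<in>D. op_close \<gamma> \<sigma> e" if e: "0 < e" for e
  proof -
    obtain N where "op_close (g N) \<gamma> e"
      using conv[OF e] by blast
    then show ?thesis
      using gD[of N] by (auto simp: op_close_commute)
  qed
  then have "\<gamma> \<in> D"
    by (rule closed_subspace_FY_closed[OF D \<open>\<gamma> \<in> FY\<close>])
  then show ?thesis
    using that conv by blast
qed

lemma closed_linf_embed_image:
  fixes D :: "(('a::real_normed_vector \<Rightarrow> 'b::banach) \<Rightarrow> 'b) set"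
  assumes D: "closed_subspace_FY D"
  shows "closed (linf_embed ` D)"
  unfolding closed_sequential_limits
proof (intro allI impI, elim conjE)
  fix z l
  assume zD: "\<forall>n. z n \<in> linf_embed ` D" and lim: "z \<longlonglongrightarrow> l"
  have "\<forall>n. \<exists>\<gamma>. \<gamma> \<in> D \<and> z n = linf_embed \<gamma>"
    using zD by blast
  then obtain g where gD: "\<And>n. g n \<in> D" and z: "\<And>n. z n = linf_embed (g n)"
    by metis
  have dist_z: "dist (z n) (linf_embed \<gamma>) \<le> e \<longleftrightarrow> op_close (g n) \<gamma> e"
    if "\<gamma> \<in> D" "0 \<le> e" for n \<gamma> e
    using op_close_iff_dist_linf_embed[OF FY_bounded FY_bounded, of "g n" \<gamma> e]
      closed_subspace_FY_subset[OF D] gD that by (auto simp: z)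
  have Cauchy: "\<exists>N. \<forall>m\<ge>N. \<forall>n\<ge>N. op_close (g m) (g n) e" if "0 < e" for e
  proof -
    obtain N where "\<forall>m\<ge>N. \<forall>n\<ge>N. dist (z m) (z n) < e"
      using LIMSEQ_imp_Cauchy[OF lim] \<open>0 < e\<close> unfolding Cauchy_def by blast
    then show ?thesis
      using dist_z[OF gD] \<open>0 < e\<close> z by (metis less_imp_le)
  qed
  obtain \<gamma> where "\<gamma> \<in> D" and conv: "\<And>e. 0 < e \<Longrightarrow> \<exists>N. \<forall>n\<ge>N. op_close (g n) \<gamma> e"
    using closed_subspace_FY_complete[where g = g, OF D gD Cauchy] by blast
  have "z \<longlonglongrightarrow> linf_embed \<gamma>"
  proof (rule metric_LIMSEQ_I)
    fix e :: real
    assume "0 < e"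
    then obtain N where N: "\<forall>n\<ge>N. op_close (g n) \<gamma> (e / 2)"
      using conv[of "e / 2"] by auto
    have "dist (z n) (linf_embed \<gamma>) \<le> e / 2" if "n \<ge> N" for n
      by (subst dist_z[OF \<open>\<gamma> \<in> D\<close>]) (use N that \<open>0 < e\<close> in auto)
    then show "\<exists>N. \<forall>n\<ge>N. dist (z n) (linf_embed \<gamma>) < e"
      using \<open>0 < e\<close> by fastforce
  qed
  then show "l \<in> linf_embed ` D"
    using LIMSEQ_unique[OF lim] \<open>\<gamma> \<in> D\<close> by blast
qed

lemma subspace_linf_embed_image:
  assumes D: "closed_subspace_FY D"
  shows "subspace (linf_embed ` D)"
proof (rule subspaceI)
  have bounded: "Lip0_bounded \<gamma>" if "\<gamma> \<in> D" for \<gamma>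
    using that closed_subspace_FY_subset[OF D] FY_bounded by blast
  have zero: "(\<lambda>f. 0) \<in> D"
    and add: "\<forall>\<gamma>\<in>D. \<forall>\<sigma>\<in>D. (\<lambda>f. \<gamma> f + \<sigma> f) \<in> D"
    and scale: "\<forall>c. \<forall>\<gamma>\<in>D. (\<lambda>f. c *\<^sub>R \<gamma> f) \<in> D"
    using D unfolding closed_subspace_FY_def by simp_all
  show "0 \<in> linf_embed ` D"
    using zero linf_embed_zero by force
  show "u + v \<in> linf_embed ` D" if uv: "u \<in> linf_embed ` D" "v \<in> linf_embed ` D" for u v
  proof -
    obtain \<gamma> \<sigma> where "\<gamma> \<in> D" "\<sigma> \<in> D" "u = linf_embed \<gamma>" "v = linf_embed \<sigma>"
      using uv by blast
    then have "u + v = linf_embed (\<lambda>f. \<gamma> f + \<sigma> f)" "(\<lambda>f. \<gamma> f + \<sigma> f) \<in> D"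
      using add linf_embed_add[OF bounded bounded] by auto
    then show ?thesis
      by blast
  qed
  show "c *\<^sub>R u \<in> linf_embed ` D" if u: "u \<in> linf_embed ` D" for c u
  proof -
    obtain \<gamma> where "\<gamma> \<in> D" "u = linf_embed \<gamma>"
      using u by blast
    then have "c *\<^sub>R u = linf_embed (\<lambda>f. c *\<^sub>R \<gamma> f)" "(\<lambda>f. c *\<^sub>R \<gamma> f) \<in> D"
      using scale linf_embed_scale[OF bounded] by auto
    then show ?thesis
      by blast
  qed
qed

section \<open>Bounded operators on \<open>\<D>\<close> are evaluations\<close>

definition delta_pullback ::
    "((('a::real_normed_vector \<Rightarrow> 'b::real_normed_vector) \<times> ('b \<Rightarrow> real)) discrete \<Rightarrow>\<^sub>C real \<Rightarrow> 'b)
     \<Rightarrow> 'a \<Rightarrow> 'b" where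
  "delta_pullback T x = T (linf_embed (delta x))"

context
  fixes T :: "(('a::real_normed_vector \<Rightarrow> 'b::real_normed_vector) \<times> ('b \<Rightarrow> real)) discrete \<Rightarrow>\<^sub>C real \<Rightarrow> 'b"
    and K :: real
  assumes T_linear: "linear T" and T_bound: "\<And>u. norm (T u) \<le> K * norm u" and K: "0 \<le> K"
begin

lemma delta_pullback_Lip0:
  shows "delta_pullback T \<in> Lip0" and "lipnorm (delta_pullback T) \<le> K"
proof -
  have dist_delta: "dist (linf_embed (delta x :: ('a \<Rightarrow> 'b) \<Rightarrow> 'b)) (linf_embed (delta y)) \<le> norm (x - y)"
    for x y
  proof -
    have "op_close (delta x :: ('a \<Rightarrow> 'b) \<Rightarrow> 'b) (delta y) (norm (x - y))"
      unfolding op_close_def delta_def by (simp add: Lip0_norm_diff_le mult.commute)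
    then show ?thesis
      using op_close_iff_dist_linf_embed[OF delta_bounded delta_bounded norm_ge_zero] by blast
  qed
  have "norm (delta_pullback T x - delta_pullback T y) \<le> K * norm (x - y)" for x y
  proof -
    have "norm (delta_pullback T x - delta_pullback T y)
        = norm (T (linf_embed (delta x) - linf_embed (delta y)))"
      by (simp add: delta_pullback_def linear_diff[OF T_linear])
    also have "\<dots> \<le> K * dist (linf_embed (delta x :: ('a \<Rightarrow> 'b) \<Rightarrow> 'b)) (linf_embed (delta y))"
      using T_bound by (simp add: dist_norm)
    also have "\<dots> \<le> K * norm (x - y)"
      using dist_delta K by (rule mult_left_mono)
    finally show ?thesis .
  qed
  moreover have "delta_pullback T 0 = 0"
  proof -
    have "delta 0 = (\<lambda>f :: 'a \<Rightarrow> 'b. 0 :: 'b)"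
      by (auto simp: delta_def Lip0_def)
    then show ?thesis
      unfolding delta_pullback_def by (simp add: linf_embed_zero linear_0[OF T_linear])
  qed
  ultimately show "delta_pullback T \<in> Lip0" and "lipnorm (delta_pullback T) \<le> K"
    using Lip0I K by blast+
qed

lemma delta_pullback_delta_span:
  assumes "\<sigma> \<in> delta_span"
  shows "T (linf_embed \<sigma>) = \<sigma> (delta_pullback T)"
proof -
  obtain n c xs where \<sigma>: "\<sigma> = (\<lambda>f. \<Sum>i<(n::nat). c i *\<^sub>R delta (xs i) f)"
    using assms unfolding delta_span_def by blast
  have "T (linf_embed \<sigma>) = (\<Sum>i<n. c i *\<^sub>R delta_pullback T (xs i))"
    unfolding \<sigma> delta_pullback_def
    by (simp add: linf_embed_sum delta_bounded linear_sum[OF T_linear] linear_scale[OF T_linear])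
  also have "\<dots> = \<sigma> (delta_pullback T)"
    unfolding \<sigma> delta_def using delta_pullback_Lip0(1) by simp
  finally show ?thesis .
qed

lemma delta_pullback_FY:
  assumes \<gamma>: "\<gamma> \<in> FY"
  shows "T (linf_embed \<gamma>) = \<gamma> (delta_pullback T)"
proof -
  let ?h = "delta_pullback T"
  have "norm (T (linf_embed \<gamma>) - \<gamma> ?h) \<le> e * (2 * K)" if "0 < e" for e
  proof -
    obtain \<sigma> where \<sigma>: "\<sigma> \<in> delta_span" "op_close \<gamma> \<sigma> e"
      using \<gamma> \<open>0 < e\<close> unfolding FY_def by blast
    have "norm (T (linf_embed \<gamma>) - T (linf_embed \<sigma>)) \<le> K * e"
    proof -
      have "dist (linf_embed \<gamma>) (linf_embed \<sigma>) \<le> e"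
        using \<sigma> op_close_iff_dist_linf_embed[OF FY_bounded[OF \<gamma>] delta_span_bounded] \<open>0 < e\<close>
        by simp
      then have "K * norm (linf_embed \<gamma> - linf_embed \<sigma>) \<le> K * e"
        using K by (simp add: dist_norm mult_left_mono)
      then show ?thesis
        using T_bound[of "linf_embed \<gamma> - linf_embed \<sigma>"] by (simp add: linear_diff[OF T_linear])
    qed
    moreover have "norm (\<sigma> ?h - \<gamma> ?h) \<le> e * K"
    proof -
      have "norm (\<gamma> ?h - \<sigma> ?h) \<le> e * lipnorm ?h"
        using \<sigma>(2) delta_pullback_Lip0(1) unfolding op_close_def by blast
      also have "\<dots> \<le> e * K"
        using delta_pullback_Lip0(2) \<open>0 < e\<close> by simp
      finally show ?thesis
        by (simp add: norm_minus_commute)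
    qed
    moreover have "T (linf_embed \<gamma>) - \<gamma> ?h = (T (linf_embed \<gamma>) - T (linf_embed \<sigma>)) + (\<sigma> ?h - \<gamma> ?h)"
      using delta_pullback_delta_span[OF \<sigma>(1)] by simp
    then have "norm (T (linf_embed \<gamma>) - \<gamma> ?h)
        \<le> norm (T (linf_embed \<gamma>) - T (linf_embed \<sigma>)) + norm (\<sigma> ?h - \<gamma> ?h)"
      by (metis norm_triangle_ineq)
    ultimately show ?thesis
      by (simp add: algebra_simps)
  qed
  then have "norm (T (linf_embed \<gamma>) - \<gamma> ?h) \<le> 0"
    by (rule field_le_epsilon_mult)
  then show ?thesis
    by simp
qed

end

lemma linf_embed_transfer:
  fixes D :: "(('a::real_normed_vector \<Rightarrow> 'b::real_normed_vector) \<Rightarrow> 'b) set" and T :: "(('a \<Rightarrow> 'b) \<Rightarrow> 'b) \<Rightarrow> 'b"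
  assumes D: "closed_subspace_FY D"
    and T_add: "\<forall>\<gamma>\<in>D. \<forall>\<sigma>\<in>D. T (\<lambda>f. \<gamma> f + \<sigma> f) = T \<gamma> + T \<sigma>"
    and T_scale: "\<forall>c. \<forall>\<gamma>\<in>D. T (\<lambda>f. c *\<^sub>R \<gamma> f) = c *\<^sub>R T \<gamma>"
    and T_bound: "\<forall>\<gamma>\<in>D. norm (T \<gamma>) \<le> K * opnorm \<gamma>"
  defines "T\<^sub>S \<equiv> T \<circ> inv_into D linf_embed"
  shows "linear_on_set (linf_embed ` D) T\<^sub>S"
    and "\<forall>u\<in>linf_embed ` D. norm (T\<^sub>S u) \<le> K * norm u"
    and "\<forall>\<gamma>\<in>D. T\<^sub>S (linf_embed \<gamma>) = T \<gamma>"
proof -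
  have bounded: "Lip0_bounded \<gamma>" if "\<gamma> \<in> D" for \<gamma>
    using that closed_subspace_FY_subset[OF D] FY_bounded by blast
  have add: "\<forall>\<gamma>\<in>D. \<forall>\<sigma>\<in>D. (\<lambda>f. \<gamma> f + \<sigma> f) \<in> D"
    and scale: "\<forall>c. \<forall>\<gamma>\<in>D. (\<lambda>f. c *\<^sub>R \<gamma> f) \<in> D"
    using D unfolding closed_subspace_FY_def by simp_all
  have T\<^sub>S: "T\<^sub>S (linf_embed \<gamma>) = T \<gamma>" if "\<gamma> \<in> D" for \<gamma>
    using inv_into_f_f[OF inj_on_subset[OF inj_on_linf_embed closed_subspace_FY_subset[OF D]] that]
    unfolding T\<^sub>S_def by simp
  then show "\<forall>\<gamma>\<in>D. T\<^sub>S (linf_embed \<gamma>) = T \<gamma>"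
    by blast
  show "\<forall>u\<in>linf_embed ` D. norm (T\<^sub>S u) \<le> K * norm u"
    using T\<^sub>S T_bound norm_linf_embed[OF bounded] by auto
  show "linear_on_set (linf_embed ` D) T\<^sub>S"
    unfolding linear_on_set_def
  proof (intro conjI ballI allI)
    fix u v
    assume "u \<in> linf_embed ` D" "v \<in> linf_embed ` D"
    then obtain \<gamma> \<sigma> where "\<gamma> \<in> D" "\<sigma> \<in> D" "u = linf_embed \<gamma>" "v = linf_embed \<sigma>"
      by blast
    then show "T\<^sub>S (u + v) = T\<^sub>S u + T\<^sub>S v"
      using T\<^sub>S T_add add by (simp flip: linf_embed_add[OF bounded bounded])
  next
    fix c u
    assume "u \<in> linf_embed ` D"
    then obtain \<gamma> where "\<gamma> \<in> D" "u = linf_embed \<gamma>"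
      by blast
    then show "T\<^sub>S (c *\<^sub>R u) = c *\<^sub>R T\<^sub>S u"
      using T\<^sub>S T_scale scale by (simp flip: linf_embed_scale[OF bounded])
  qed
qed

lemma bounded_operator_on_D_is_evaluation:
  fixes D :: "(('a::real_normed_vector \<Rightarrow> 'b::banach) \<Rightarrow> 'b) set" and T :: "(('a \<Rightarrow> 'b) \<Rightarrow> 'b) \<Rightarrow> 'b"
  assumes injY: "injective_wrt TYPE((('a \<Rightarrow> 'b) \<times> ('b \<Rightarrow> real)) discrete \<Rightarrow>\<^sub>C real) TYPE('b)"
    and D: "closed_subspace_FY D"
    and T_add: "\<forall>\<gamma>\<in>D. \<forall>\<sigma>\<in>D. T (\<lambda>f. \<gamma> f + \<sigma> f) = T \<gamma> + T \<sigma>"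
    and T_scale: "\<forall>c. \<forall>\<gamma>\<in>D. T (\<lambda>f. c *\<^sub>R \<gamma> f) = c *\<^sub>R T \<gamma>"
    and K: "0 \<le> K" and T_bound: "\<forall>\<gamma>\<in>D. norm (T \<gamma>) \<le> K * opnorm \<gamma>"
  obtains h where "h \<in> Lip0" "lipnorm h \<le> K" "\<forall>\<gamma>\<in>D. T \<gamma> = \<gamma> h"
proof -
  let ?T\<^sub>S = "T \<circ> inv_into D linf_embed"
  note transfer = linf_embed_transfer[OF D T_add T_scale T_bound]
  obtain T' :: "((('a \<Rightarrow> 'b) \<times> ('b \<Rightarrow> real)) discrete \<Rightarrow>\<^sub>C real) \<Rightarrow> 'b"
    where T': "bounded_linear T'" "\<forall>u\<in>linf_embed ` D. T' u = ?T\<^sub>S u" "\<forall>u. norm (T' u) \<le> K * norm u"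
    using injY K transfer(1,2) subspace_linf_embed_image[OF D] closed_linf_embed_image[OF D]
    unfolding injective_wrt_def by blast
  have "linear T'"
    using T'(1) bounded_linear.linear by blast
  have "T \<gamma> = \<gamma> (delta_pullback T')" if "\<gamma> \<in> D" for \<gamma>
  proof -
    have "T \<gamma> = T' (linf_embed \<gamma>)"
      using T'(2) transfer(3) that by simp
    also have "\<dots> = \<gamma> (delta_pullback T')"
      using delta_pullback_FY[OF \<open>linear T'\<close> _ K] T'(3) closed_subspace_FY_subset[OF D] that
      by blast
    finally show ?thesis .
  qed
  then show ?thesis
    using that delta_pullback_Lip0[OF \<open>linear T'\<close> _ K] T'(3) by blast
qed

lemma bdd_lin_on_D_is_evaluation:
  fixes D :: "(('a::real_normed_vector \<Rightarrow> 'b::banach) \<Rightarrow> 'b) set"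
  assumes injY: "injective_wrt TYPE((('a \<Rightarrow> 'b) \<times> ('b \<Rightarrow> real)) discrete \<Rightarrow>\<^sub>C real) TYPE('b)"
    and D: "closed_subspace_FY D" and T: "bdd_lin_on_D D T"
  shows "\<exists>f\<in>Lip0. \<forall>\<gamma>\<in>D. T \<gamma> = \<gamma> f"
proof -
  obtain K where T_add: "\<forall>\<gamma>\<in>D. \<forall>\<sigma>\<in>D. T (\<lambda>f. \<gamma> f + \<sigma> f) = T \<gamma> + T \<sigma>"
    and T_scale: "\<forall>c. \<forall>\<gamma>\<in>D. T (\<lambda>f. c *\<^sub>R \<gamma> f) = c *\<^sub>R T \<gamma>"
    and K: "\<forall>\<gamma>\<in>D. norm (T \<gamma>) \<le> K * opnorm \<gamma>"
    using T unfolding bdd_lin_on_D_def by blast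
  have "\<forall>\<gamma>\<in>D. norm (T \<gamma>) \<le> max K 0 * opnorm \<gamma>"
  proof
    fix \<gamma>
    assume "\<gamma> \<in> D"
    then have "K * opnorm \<gamma> \<le> max K 0 * opnorm \<gamma>"
      using opnorm_nonneg[OF FY_bounded] closed_subspace_FY_subset[OF D]
      by (intro mult_right_mono) auto
    then show "norm (T \<gamma>) \<le> max K 0 * opnorm \<gamma>"
      using K \<open>\<gamma> \<in> D\<close> by fastforce
  qed
  then obtain h where "h \<in> Lip0" "\<forall>\<gamma>\<in>D. T \<gamma> = \<gamma> h"
    using bounded_operator_on_D_is_evaluation[OF injY D T_add T_scale max.cobounded2] by blast
  then show ?thesis
    by blast
qed

lemma eval_bdd_lin_on_D:
  assumes D: "closed_subspace_FY D" and f: "f \<in> Lip0"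
  shows "bdd_lin_on_D D (\<lambda>\<gamma>. \<gamma> f)"
  unfolding bdd_lin_on_D_def
  using opnorm_bound[OF FY_bounded f] closed_subspace_FY_subset[OF D]
  by (auto simp: mult.commute)

lemma LDY_norm_eval_le_quot_norm:
  assumes D: "closed_subspace_FY D" and f: "f \<in> Lip0"
  shows "LDY_norm D (\<lambda>\<gamma>. \<gamma> f) \<le> quot_norm D f"
  unfolding quot_norm_def
proof (rule cInf_greatest)
  have "(\<lambda>x. f x - f x) \<in> preannih D"
    using Lip0_diff[OF f f] FY_diff[OF _ f f] closed_subspace_FY_subset[OF D]
    unfolding preannih_def by auto
  then show "{lipnorm (\<lambda>x. f x - g x) | g. g \<in> preannih D} \<noteq> {}"
    by blast
next
  fix q
  assume "q \<in> {lipnorm (\<lambda>x. f x - g x) | g. g \<in> preannih D}"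
  then obtain g where g: "g \<in> Lip0" "\<forall>\<gamma>\<in>D. \<gamma> g = 0" and q: "q = lipnorm (\<lambda>x. f x - g x)"
    unfolding preannih_def by blast
  have fg: "(\<lambda>x. f x - g x) \<in> Lip0"
    using Lip0_diff[OF f g(1)] .
  have "norm (\<gamma> f) \<le> q * opnorm \<gamma>" if "\<gamma> \<in> D" for \<gamma>
  proof -
    have "\<gamma> \<in> FY"
      using that closed_subspace_FY_subset[OF D] by blast
    then have "\<gamma> f = \<gamma> (\<lambda>x. f x - g x)"
      using FY_diff[OF \<open>\<gamma> \<in> FY\<close> f g(1)] g(2) that by simp
    then show ?thesis
      using opnorm_bound[OF FY_bounded[OF \<open>\<gamma> \<in> FY\<close>] fg] q by (simp add: mult.commute)
  qed
  then show "LDY_norm D (\<lambda>\<gamma>. \<gamma> f) \<le> q"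
    unfolding LDY_norm_def using q lipnorm_nonneg[OF fg] by (intro Inf_bounds_le) auto
qed

lemma quot_norm_le_LDY_norm_eval:
  fixes D :: "(('a::real_normed_vector \<Rightarrow> 'b::banach) \<Rightarrow> 'b) set"
  assumes injY: "injective_wrt TYPE((('a \<Rightarrow> 'b) \<times> ('b \<Rightarrow> real)) discrete \<Rightarrow>\<^sub>C real) TYPE('b)"
    and D: "closed_subspace_FY D" and f: "f \<in> Lip0"
  shows "quot_norm D f \<le> LDY_norm D (\<lambda>\<gamma>. \<gamma> f)"
proof -
  let ?L = "LDY_norm D (\<lambda>\<gamma>. \<gamma> f)"
  have FY: "\<gamma> \<in> FY" if "\<gamma> \<in> D" for \<gamma>
    using that closed_subspace_FY_subset[OF D] by blast
  have bound: "\<forall>\<gamma>\<in>D. norm (\<gamma> f) \<le> lipnorm f * opnorm \<gamma>"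
    using opnorm_bound[OF FY_bounded[OF FY] f] by (simp add: mult.commute)
  have opnorm: "\<forall>\<gamma>\<in>D. 0 \<le> opnorm \<gamma>"
    using opnorm_nonneg[OF FY_bounded[OF FY]] by blast
  have "0 \<le> ?L" "\<forall>\<gamma>\<in>D. norm (\<gamma> f) \<le> ?L * opnorm \<gamma>"
    unfolding LDY_norm_def
    using Inf_bounds_nonneg[OF lipnorm_nonneg[OF f] bound]
      Inf_bounds_bound[OF lipnorm_nonneg[OF f] bound opnorm] by auto
  then obtain h where h: "h \<in> Lip0" "lipnorm h \<le> ?L" "\<forall>\<gamma>\<in>D. \<gamma> f = \<gamma> h"
    using bounded_operator_on_D_is_evaluation[OF injY D, of "\<lambda>\<gamma>. \<gamma> f"] by auto
  have "\<gamma> (\<lambda>x. f x - h x) = 0" if "\<gamma> \<in> D" for \<gamma>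
    using FY_diff[OF FY[OF that] f h(1)] h(3) that by simp
  then have "(\<lambda>x. f x - h x) \<in> preannih D"
    using Lip0_diff[OF f h(1)] unfolding preannih_def by blast
  then have "lipnorm h \<in> {lipnorm (\<lambda>x. f x - g x) | g. g \<in> preannih D}"
    by force
  moreover have "bdd_below {lipnorm (\<lambda>x. f x - g x) | g. g \<in> preannih D}"
  proof (rule bdd_belowI)
    fix q
    assume "q \<in> {lipnorm (\<lambda>x. f x - g x) | g. g \<in> preannih D}"
    then obtain g where "g \<in> Lip0" "q = lipnorm (\<lambda>x. f x - g x)"
      unfolding preannih_def by blast
    then show "0 \<le> q"
      using lipnorm_nonneg[OF Lip0_diff[OF f]] by blast
  qed
  ultimately have "quot_norm D f \<le> lipnorm h"
    unfolding quot_norm_def by (rule cInf_lower)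
  then show ?thesis
    using h(2) by simp
qed

theorem mainTheorem13:
  fixes D :: "(('a::banach \<Rightarrow> 'b::banach) \<Rightarrow> 'b) set"
  assumes injY: "injective_wrt TYPE((('a \<Rightarrow> 'b) \<times> ('b \<Rightarrow> real)) discrete \<Rightarrow>\<^sub>C real) TYPE('b)"
    and D: "closed_subspace_FY D"
  shows "(\<forall>f\<in>Lip0. \<forall>g\<in>Lip0.
            ((\<lambda>x. f x - g x) \<in> preannih D \<longrightarrow> (\<forall>\<gamma>\<in>D. \<gamma> f = \<gamma> g)))
       \<and> (\<forall>f\<in>Lip0. \<forall>g\<in>Lip0. \<forall>c::real. \<forall>\<gamma>\<in>D.
            \<gamma> (\<lambda>x. f x + c *\<^sub>R g x) = \<gamma> f + c *\<^sub>R \<gamma> g)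
       \<and> (\<forall>f\<in>Lip0. bdd_lin_on_D D (\<lambda>\<gamma>. \<gamma> f) \<and>
            LDY_norm D (\<lambda>\<gamma>. \<gamma> f) = quot_norm D f)
       \<and> (\<forall>T. bdd_lin_on_D D T \<longrightarrow> (\<exists>f\<in>Lip0. \<forall>\<gamma>\<in>D. T \<gamma> = \<gamma> f))"
proof (intro conjI ballI allI impI)
  have FY: "\<gamma> \<in> FY" if "\<gamma> \<in> D" for \<gamma>
    using that closed_subspace_FY_subset[OF D] by blast
  show "\<gamma> f = \<gamma> g" if "f \<in> Lip0" "g \<in> Lip0" "(\<lambda>x. f x - g x) \<in> preannih D" "\<gamma> \<in> D"
    for f g \<gamma>
  proof -
    have "\<gamma> (\<lambda>x. f x - g x) = 0"
      using that(3,4) unfolding preannih_def by blast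
    then show ?thesis
      using FY_diff[OF FY[OF that(4)] that(1,2)] by simp
  qed
  show "\<gamma> (\<lambda>x. f x + c *\<^sub>R g x) = \<gamma> f + c *\<^sub>R \<gamma> g" if "f \<in> Lip0" "g \<in> Lip0" "\<gamma> \<in> D"
    for f g c \<gamma>
    using FY_linear[OF FY[OF that(3)] that(1,2)] .
  show "bdd_lin_on_D D (\<lambda>\<gamma>. \<gamma> f)" if "f \<in> Lip0" for f
    using eval_bdd_lin_on_D[OF D that] .
  show "LDY_norm D (\<lambda>\<gamma>. \<gamma> f) = quot_norm D f" if "f \<in> Lip0" for f
    using LDY_norm_eval_le_quot_norm[OF D that] quot_norm_le_LDY_norm_eval[OF injY D that]
    by (rule antisym)
  show "\<exists>f\<in>Lip0. \<forall>\<gamma>\<in>D. T \<gamma> = \<gamma> f" if "bdd_lin_on_D D T" for T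
    using bdd_lin_on_D_is_evaluation[OF injY D that] .
qed

end
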